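(* Let $U_1$ be a vector space over a field of characteristic zero, let $U_{0-}=\bigoplus_{p\geq1}U_{-p+1}$ with the bilinear operation $\circ$ defined below, and set $[\![A,B]\!]=A\circ B-B\circ A$ for $A,B\in U_{0-}$. Then $(U_{0-},[\![\cdot,\cdot]\!])$ is a Lie algebra.
   Context: Define vector spaces recursively by $U_{-p+1}=\mathrm{Hom}(U_1,U_{-p+2})$ for $p=1,2,\ldots$ (all linear maps). Elements of $U_{-p+1}$ are called operators of order $p$ (elements of $U_1$ have order $0$). For an operator $A$ of order $p\geq1$ and $x\in U_1$ set $A\circ x=A(x)$ and $x\circ A=0$. For operators $A,B$ of orders $p,q\geq1$, define $A\circ B\in U_{-(p+q-1)+1}$ recursively by $(A\circ B)(x)=A\circ B(x)+A(x)\circ B$ for all $x\in U_1$, and extend $\circ$ bilinearly to $U_{0-}$. *)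

theory Defs
  imports Complex_Main "HOL-Library.Function_Algebras"
begin

text \<open>An operator of order p, i.e. an element of U_{-p+1} = Hom(U_1, Hom(U_1, ... U_1)),
  is represented in uncurried form as a function on argument lists:
  A [x1,...,xp] stands for A(x1)(x2)...(xp).  Application to one argument is
  A(x) = (\<lambda>zs. A (x # zs)).  Elements of U_1 are the order-0 case.\<close>

definition multilinear_op ::
  "('a::field \<Rightarrow> 'v::ab_group_add \<Rightarrow> 'v) \<Rightarrow> nat \<Rightarrow> ('v list \<Rightarrow> 'v) \<Rightarrow> bool" where
  "multilinear_op sc p A \<longleftrightarrow>
     (\<forall>us vs. length us + 1 + length vs = p \<longrightarrow>
        Vector_Spaces.linear sc sc (\<lambda>x. A (us @ x # vs)))"

text \<open>The composition of operators of orders p and q (result of order p+q-1),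
  defined by (A o B)(x) = A o B(x) + A(x) o B, where for v in U_1 we have
  A o v = A(v) and v o B = 0.\<close>

fun opcomp :: "nat \<Rightarrow> nat \<Rightarrow> ('v::ab_group_add list \<Rightarrow> 'v) \<Rightarrow> ('v list \<Rightarrow> 'v) \<Rightarrow> 'v list \<Rightarrow> 'v" where
  "opcomp p q A B [] = 0"
| "opcomp p q A B (x # ys) =
     (if q \<le> 1 then A (B [x] # ys) else opcomp p (q - 1) A (\<lambda>zs. B (x # zs)) ys)
   + (if p \<le> 1 then 0 else opcomp (p - 1) q (\<lambda>zs. A (x # zs)) B ys)"

text \<open>U_{0-} = direct sum over p >= 1 of U_{-p+1}: a finitely supported family of
  operators, the component of order p being multilinear and vanishing on argument
  lists of length different from p.\<close>

definition U0m :: "('a::field \<Rightarrow> 'v::ab_group_add \<Rightarrow> 'v) \<Rightarrow> (nat \<Rightarrow> 'v list \<Rightarrow> 'v) set" where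
  "U0m sc = {A. A 0 = (\<lambda>_. 0)
              \<and> (\<forall>p xs. length xs \<noteq> p \<longrightarrow> A p xs = 0)
              \<and> (\<forall>p. multilinear_op sc p (A p))
              \<and> finite {p. A p \<noteq> (\<lambda>_. 0)}}"

definition circ :: "(nat \<Rightarrow> 'v::ab_group_add list \<Rightarrow> 'v) \<Rightarrow> (nat \<Rightarrow> 'v list \<Rightarrow> 'v) \<Rightarrow> nat \<Rightarrow> 'v list \<Rightarrow> 'v" where
  "circ A B r xs =
     (if r = 0 \<or> length xs \<noteq> r then 0
      else (\<Sum>p\<in>{1..r}. opcomp p (r + 1 - p) (A p) (B (r + 1 - p)) xs))"

definition bracket :: "(nat \<Rightarrow> 'v::ab_group_add list \<Rightarrow> 'v) \<Rightarrow> (nat \<Rightarrow> 'v list \<Rightarrow> 'v) \<Rightarrow> nat \<Rightarrow> 'v list \<Rightarrow> 'v" where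
  "bracket A B = circ A B - circ B A"

definition scale_U0m :: "('a \<Rightarrow> 'v \<Rightarrow> 'v) \<Rightarrow> 'a \<Rightarrow> (nat \<Rightarrow> 'v list \<Rightarrow> 'v) \<Rightarrow> nat \<Rightarrow> 'v list \<Rightarrow> 'v" where
  "scale_U0m sc c A = (\<lambda>p xs. sc c (A p xs))"

definition is_lie_algebra :: "('a::field \<Rightarrow> 'w::ab_group_add \<Rightarrow> 'w) \<Rightarrow> 'w set \<Rightarrow> ('w \<Rightarrow> 'w \<Rightarrow> 'w) \<Rightarrow> bool" where
  "is_lie_algebra sc S br \<longleftrightarrow>
     0 \<in> S \<and> (\<forall>x\<in>S. \<forall>y\<in>S. x + y \<in> S) \<and> (\<forall>c. \<forall>x\<in>S. sc c x \<in> S)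
   \<and> (\<forall>x\<in>S. \<forall>y\<in>S. br x y \<in> S)
   \<and> (\<forall>x\<in>S. \<forall>y\<in>S. \<forall>z\<in>S. br (x + y) z = br x z + br y z \<and> br z (x + y) = br z x + br z y)
   \<and> (\<forall>c. \<forall>x\<in>S. \<forall>y\<in>S. br (sc c x) y = sc c (br x y) \<and> br x (sc c y) = sc c (br x y))
   \<and> (\<forall>x\<in>S. br x x = 0)
   \<and> (\<forall>x\<in>S. \<forall>y\<in>S. \<forall>z\<in>S. br x (br y z) + br y (br z x) + br z (br x y) = 0)"

end

theory Submission
  imports Defs
begin

text \<open>The composition \<open>\<circ>\<close> is right-symmetric (pre-Lie): the associator
  \<open>(A \<circ> B) \<circ> C - A \<circ> (B \<circ> C)\<close> is symmetric in \<open>B\<close> and \<open>C\<close>, and the commutator of any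
  bilinear right-symmetric product satisfies the Jacobi identity. Right symmetry is checked on
  homogeneous operators by induction on the argument list: evaluation at the first argument
  \<open>x\<close> acts on \<open>\<circ>\<close> as a derivation, \<open>(A \<circ> B)(x) = A \<circ> B(x) + A(x) \<circ> B\<close>, so the associator
  of \<open>A, B, C\<close> at \<open>x\<close> is the sum of the associators with \<open>x\<close> fed to \<open>A\<close>, \<open>B\<close> or \<open>C\<close>,
  plus the terms \<open>A(C(x)) \<circ> B\<close> and \<open>A(B(x)) \<circ> C\<close>, which are exchanged by swapping \<open>B\<close> and
  \<open>C\<close>.\<close>

section \<open>Commutators of right-symmetric products\<close>

context vector_space
begin

lemma is_lie_algebra_commutator:
  assumes S: "subspace S"
    and closed: "\<And>x y. x \<in> S \<Longrightarrow> y \<in> S \<Longrightarrow> m x y \<in> S"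
    and add_left: "\<And>x y z. x \<in> S \<Longrightarrow> y \<in> S \<Longrightarrow> z \<in> S \<Longrightarrow> m (x + y) z = m x z + m y z"
    and add_right: "\<And>x y z. x \<in> S \<Longrightarrow> y \<in> S \<Longrightarrow> z \<in> S \<Longrightarrow> m x (y + z) = m x y + m x z"
    and scale_left: "\<And>c x y. x \<in> S \<Longrightarrow> y \<in> S \<Longrightarrow> m (c *s x) y = c *s m x y"
    and scale_right: "\<And>c x y. x \<in> S \<Longrightarrow> y \<in> S \<Longrightarrow> m x (c *s y) = c *s m x y"
    and right_symmetric: "\<And>x y z. x \<in> S \<Longrightarrow> y \<in> S \<Longrightarrow> z \<in> S \<Longrightarrow>
      m (m x y) z - m x (m y z) = m (m x z) y - m x (m z y)"
  shows "is_lie_algebra scale S (\<lambda>x y. m x y - m y x)"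
proof -
  have diff_left: "m (x - y) z = m x z - m y z" if "x \<in> S" "y \<in> S" "z \<in> S" for x y z
    using add_left[of "x - y" y z] that subspace_diff[OF S] by (simp add: eq_diff_eq)
  have diff_right: "m x (y - z) = m x y - m x z" if "x \<in> S" "y \<in> S" "z \<in> S" for x y z
    using add_right[of x "y - z" z] that subspace_diff[OF S] by (simp add: eq_diff_eq)
  have jacobi: "(m x (m y z - m z y) - m (m y z - m z y) x)
      + (m y (m z x - m x z) - m (m z x - m x z) y)
      + (m z (m x y - m y x) - m (m x y - m y x) z) = 0"
    if xyz: "x \<in> S" "y \<in> S" "z \<in> S" for x y z
  proof -
    have "(m x (m y z - m z y) - m (m y z - m z y) x)
      + (m y (m z x - m x z) - m (m z x - m x z) y)
      + (m z (m x y - m y x) - m (m x y - m y x) z)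
      = - ((m (m x y) z - m x (m y z) - (m (m x z) y - m x (m z y)))
         + (m (m y z) x - m y (m z x) - (m (m y x) z - m y (m x z)))
         + (m (m z x) y - m z (m x y) - (m (m z y) x - m z (m y x))))"
      using xyz by (simp add: diff_left diff_right closed algebra_simps)
    also have "\<dots> = 0"
      using right_symmetric[of x y z] right_symmetric[of y z x] right_symmetric[of z x y] xyz
      by simp
    finally show ?thesis .
  qed
  show ?thesis
    unfolding is_lie_algebra_def
    using S jacobi
    by (auto simp: subspace_def closed subspace_diff add_left add_right scale_left scale_right
        scale_right_diff_distrib)
qed

end

section \<open>Composition of homogeneous operators\<close>

lemma opcomp_map_left:
  assumes "\<And>a b. f (a + b) = f a + f b" "f 0 = 0"
  shows "opcomp p q (\<lambda>zs. f (A zs)) B xs = f (opcomp p q A B xs)"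
  using assms by (induction xs arbitrary: p q A B) simp_all

lemma opcomp_add_left:
  "opcomp p q (\<lambda>zs. A1 zs + A2 zs) B xs = opcomp p q A1 B xs + opcomp p q A2 B xs"
  by (induction xs arbitrary: p q A1 A2 B) (simp_all add: algebra_simps)

lemma opcomp_zero_left: "opcomp p q (\<lambda>zs. 0) B xs = 0"
  using opcomp_map_left[of "\<lambda>_. 0" p q "\<lambda>_. 0" B xs] by simp

lemma opcomp_sum_left:
  "opcomp p q (\<lambda>zs. \<Sum>i\<in>I. A i zs) B xs = (\<Sum>i\<in>I. opcomp p q (A i) B xs)"
  by (induction I rule: infinite_finite_induct) (simp_all add: opcomp_zero_left opcomp_add_left)

lemma opcomp_cong:
  assumes "length xs = p + q - 1" "p \<ge> 1" "q \<ge> 1"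
    and "\<And>zs. length zs = p \<Longrightarrow> A zs = A' zs" "\<And>zs. length zs = q \<Longrightarrow> B zs = B' zs"
  shows "opcomp p q A B xs = opcomp p q A' B' xs"
  using assms
proof (induction xs arbitrary: p q A B A' B')
  case Nil
  then show ?case by simp
next
  case (Cons x ys)
  have "opcomp p (q - 1) A (\<lambda>zs. B (x # zs)) ys = opcomp p (q - 1) A' (\<lambda>zs. B' (x # zs)) ys"
    if "q \<ge> 2" using Cons.prems that by (intro Cons.IH) auto
  moreover have "opcomp (p - 1) q (\<lambda>zs. A (x # zs)) B ys = opcomp (p - 1) q (\<lambda>zs. A' (x # zs)) B' ys"
    if "p \<ge> 2" using Cons.prems that by (intro Cons.IH) auto
  ultimately show ?case
    using Cons.prems by (simp add: not_le Suc_le_eq)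
qed

lemma multilinear_opD:
  "multilinear_op sc p A \<Longrightarrow> length us + 1 + length vs = p
   \<Longrightarrow> Vector_Spaces.linear sc sc (\<lambda>x. A (us @ x # vs))"
  unfolding multilinear_op_def by blast

lemma multilinear_op_Cons:
  fixes A :: "'v::ab_group_add list \<Rightarrow> 'v"
  assumes "multilinear_op sc (Suc p) A"
  shows "multilinear_op sc p (\<lambda>zs. A (x # zs))"
  unfolding multilinear_op_def
proof (intro allI impI)
  fix us vs :: "'v list"
  assume "length us + 1 + length vs = p"
  then show "Vector_Spaces.linear sc sc (\<lambda>y. A (x # us @ y # vs))"
    using multilinear_opD[OF assms, of "x # us" vs] by simp
qed

definition op_associator ::
  "nat \<Rightarrow> nat \<Rightarrow> nat \<Rightarrow> ('v::ab_group_add list \<Rightarrow> 'v) \<Rightarrow> ('v list \<Rightarrow> 'v) \<Rightarrow>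
    ('v list \<Rightarrow> 'v) \<Rightarrow> 'v list \<Rightarrow> 'v"
  where "op_associator p q s A B C =
    opcomp (p + q - 1) s (opcomp p q A B) C - opcomp p (q + s - 1) A (opcomp q s B C)"

context vector_space
begin

interpretation vs: vector_space_pair scale scale
  by unfold_locales

lemma multilinear_op_linear_Cons:
  "multilinear_op scale (Suc (length vs)) A \<Longrightarrow> Vector_Spaces.linear scale scale (\<lambda>x. A (x # vs))"
  using multilinear_opD[of scale _ A "[]" vs] by simp

lemma opcomp_add_right:
  assumes "multilinear_op scale p A" "length xs = p + q - 1" "p \<ge> 1" "q \<ge> 1"
  shows "opcomp p q A (\<lambda>zs. B1 zs + B2 zs) xs = opcomp p q A B1 xs + opcomp p q A B2 xs"
  using assms
proof (induction xs arbitrary: p q A B1 B2)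
  case Nil
  then show ?case by simp
next
  case (Cons x ys)
  have "A ((B1 [x] + B2 [x]) # ys) = A (B1 [x] # ys) + A (B2 [x] # ys)"
    if "q = 1" using Cons.prems that by (intro vs.linear_add multilinear_op_linear_Cons) simp
  moreover have "opcomp p (q - 1) A (\<lambda>zs. B1 (x # zs) + B2 (x # zs)) ys
      = opcomp p (q - 1) A (\<lambda>zs. B1 (x # zs)) ys + opcomp p (q - 1) A (\<lambda>zs. B2 (x # zs)) ys"
    if "q \<ge> 2" using Cons.prems that by (intro Cons.IH) auto
  moreover have "opcomp (p - 1) q (\<lambda>zs. A (x # zs)) (\<lambda>zs. B1 zs + B2 zs) ys
      = opcomp (p - 1) q (\<lambda>zs. A (x # zs)) B1 ys + opcomp (p - 1) q (\<lambda>zs. A (x # zs)) B2 ys"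
    if "p \<ge> 2" using Cons.prems that
    by (intro Cons.IH)
      (auto intro: multilinear_op_Cons[of scale "p - 1", simplified])
  ultimately show ?case
    using Cons.prems(3,4) by (auto simp: not_le Suc_le_eq algebra_simps)
qed

lemma opcomp_scale_right:
  assumes "multilinear_op scale p A" "length xs = p + q - 1" "p \<ge> 1" "q \<ge> 1"
  shows "opcomp p q A (\<lambda>zs. scale c (B zs)) xs = scale c (opcomp p q A B xs)"
  using assms
proof (induction xs arbitrary: p q A B)
  case Nil
  then show ?case by simp
next
  case (Cons x ys)
  have "A (scale c (B [x]) # ys) = scale c (A (B [x] # ys))"
    if "q = 1" using Cons.prems that by (intro vs.linear_scale multilinear_op_linear_Cons) simp
  moreover have "opcomp p (q - 1) A (\<lambda>zs. scale c (B (x # zs))) ys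
      = scale c (opcomp p (q - 1) A (\<lambda>zs. B (x # zs)) ys)"
    if "q \<ge> 2" using Cons.prems that by (intro Cons.IH) auto
  moreover have "opcomp (p - 1) q (\<lambda>zs. A (x # zs)) (\<lambda>zs. scale c (B zs)) ys
      = scale c (opcomp (p - 1) q (\<lambda>zs. A (x # zs)) B ys)"
    if "p \<ge> 2" using Cons.prems that
    by (intro Cons.IH)
      (auto intro: multilinear_op_Cons[of scale "p - 1", simplified])
  ultimately show ?case
    using Cons.prems(3,4) by (auto simp: not_le Suc_le_eq scale_right_distrib)
qed

lemma opcomp_zero_right:
  assumes "multilinear_op scale p A" "length xs = p + q - 1" "p \<ge> 1" "q \<ge> 1"
  shows "opcomp p q A (\<lambda>zs. 0) xs = 0"
  using opcomp_scale_right[OF assms, of 0 "\<lambda>_. 0"] by simp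

lemma opcomp_sum_right:
  assumes "multilinear_op scale p A" "length xs = p + q - 1" "p \<ge> 1" "q \<ge> 1"
  shows "opcomp p q A (\<lambda>zs. \<Sum>i\<in>I. B i zs) xs = (\<Sum>i\<in>I. opcomp p q A (B i) xs)"
  by (induction I rule: infinite_finite_induct)
    (simp_all add: opcomp_zero_right[OF assms] opcomp_add_right[OF assms])

lemma opcomp_linear_left:
  assumes "\<And>zs. length zs = p \<Longrightarrow> Vector_Spaces.linear scale scale (\<lambda>x. A x zs)"
    and "length vs = p + q - 1" "p \<ge> 1" "q \<ge> 1"
  shows "Vector_Spaces.linear scale scale (\<lambda>x. opcomp p q (A x) B vs)"
  unfolding Vector_Spaces.linear_iff
proof (intro conjI allI vector_space_axioms)
  fix x y
  have "opcomp p q (A (x + y)) B vs = opcomp p q (\<lambda>zs. A x zs + A y zs) B vs"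
    using assms by (intro opcomp_cong) (auto intro: vs.linear_add)
  then show "opcomp p q (A (x + y)) B vs = opcomp p q (A x) B vs + opcomp p q (A y) B vs"
    by (simp add: opcomp_add_left)
next
  fix c x
  have "opcomp p q (A (scale c x)) B vs = opcomp p q (\<lambda>zs. scale c (A x zs)) B vs"
    using assms by (intro opcomp_cong) (auto intro: vs.linear_scale)
  then show "opcomp p q (A (scale c x)) B vs = scale c (opcomp p q (A x) B vs)"
    by (simp add: opcomp_map_left scale_right_distrib)
qed

lemma opcomp_linear_right:
  assumes "multilinear_op scale p A"
    and "\<And>zs. length zs = q \<Longrightarrow> Vector_Spaces.linear scale scale (\<lambda>x. B x zs)"
    and "length vs = p + q - 1" "p \<ge> 1" "q \<ge> 1"
  shows "Vector_Spaces.linear scale scale (\<lambda>x. opcomp p q A (B x) vs)"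
  unfolding Vector_Spaces.linear_iff
proof (intro conjI allI vector_space_axioms)
  fix x y
  have "opcomp p q A (B (x + y)) vs = opcomp p q A (\<lambda>zs. B x zs + B y zs) vs"
    using assms by (intro opcomp_cong) (auto intro: vs.linear_add)
  then show "opcomp p q A (B (x + y)) vs = opcomp p q A (B x) vs + opcomp p q A (B y) vs"
    using assms by (simp add: opcomp_add_right)
next
  fix c x
  have "opcomp p q A (B (scale c x)) vs = opcomp p q A (\<lambda>zs. scale c (B x zs)) vs"
    using assms by (intro opcomp_cong) (auto intro: vs.linear_scale)
  then show "opcomp p q A (B (scale c x)) vs = scale c (opcomp p q A (B x) vs)"
    using assms by (simp add: opcomp_scale_right)
qed

lemma opcomp_linear_slot:
  assumes "multilinear_op scale p A" "multilinear_op scale q B" "p \<ge> 1" "q \<ge> 1"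
    and "length us + 1 + length vs = p + q - 1"
  shows "Vector_Spaces.linear scale scale (\<lambda>x. opcomp p q A B (us @ x # vs))"
  using assms
proof (induction us arbitrary: p q A B)
  case Nil
  have "Vector_Spaces.linear scale scale (\<lambda>x. A (B [x] # vs))" if "q = 1"
    using Vector_Spaces.linear_compose[of scale scale "\<lambda>x. B [x]" scale "\<lambda>y. A (y # vs)"] Nil.prems that
    by (simp add: o_def multilinear_op_linear_Cons[of "[]", simplified] multilinear_op_linear_Cons)
  moreover have "Vector_Spaces.linear scale scale (\<lambda>x. opcomp p (q - 1) A (\<lambda>zs. B (x # zs)) vs)"
    if "q \<ge> 2" using Nil.prems that
    by (intro opcomp_linear_right) (auto intro: multilinear_op_linear_Cons)
  moreover have "Vector_Spaces.linear scale scale (\<lambda>x. opcomp (p - 1) q (\<lambda>zs. A (x # zs)) B vs)"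
    if "p \<ge> 2" using Nil.prems that
    by (intro opcomp_linear_left) (auto intro: multilinear_op_linear_Cons)
  ultimately show ?case
    using Nil.prems(3,4)
    by (cases "q = 1"; cases "p = 1") (auto intro!: vs.linear_compose_add vs.linear_zero)
next
  case (Cons u us)
  have "Vector_Spaces.linear scale scale (\<lambda>x. A (B [u] # us @ x # vs))" if "q = 1"
    using Cons.prems that multilinear_opD[of scale p A "B [u] # us" vs] by simp
  moreover have "Vector_Spaces.linear scale scale (\<lambda>x. opcomp p (q - 1) A (\<lambda>zs. B (u # zs)) (us @ x # vs))"
    if "q \<ge> 2" using Cons.prems that
    by (intro Cons.IH)
      (auto intro: multilinear_op_Cons[of scale "q - 1", simplified])
  moreover have "Vector_Spaces.linear scale scale (\<lambda>x. opcomp (p - 1) q (\<lambda>zs. A (u # zs)) B (us @ x # vs))"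
    if "p \<ge> 2" using Cons.prems that
    by (intro Cons.IH)
      (auto intro: multilinear_op_Cons[of scale "p - 1", simplified])
  ultimately show ?case
    using Cons.prems(3,4)
    by (cases "q = 1"; cases "p = 1") (auto intro!: vs.linear_compose_add vs.linear_zero)
qed

lemma op_associator_Cons:
  assumes "multilinear_op scale p A" "multilinear_op scale q B" "multilinear_op scale s C"
    and "p \<ge> 1" "q \<ge> 1" "s \<ge> 1" "length (x # ys) = p + q + s - 2"
  shows "op_associator p q s A B C (x # ys) =
     (if s \<ge> 2 then op_associator p q (s - 1) A B (\<lambda>zs. C (x # zs)) ys
      else if p \<ge> 2 then opcomp (p - 1) q (\<lambda>zs. A (C [x] # zs)) B ys else 0)
   + (if q \<ge> 2 then op_associator p (q - 1) s A (\<lambda>zs. B (x # zs)) C ys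
      else if p \<ge> 2 then opcomp (p - 1) s (\<lambda>zs. A (B [x] # zs)) C ys else 0)
   + (if p \<ge> 2 then op_associator (p - 1) q s (\<lambda>zs. A (x # zs)) B C ys else 0)"
proof -
  have "p = 1 \<or> (\<exists>p'. p = Suc (Suc p'))" "q = 1 \<or> (\<exists>q'. q = Suc (Suc q'))"
    "s = 1 \<or> (\<exists>s'. s = Suc (Suc s'))"
    using assms(4-6) by presburger+
  then show ?thesis
    using assms(1-3,7)
    by (elim disjE exE) (simp_all add: op_associator_def opcomp_add_left opcomp_add_right multilinear_op_Cons)
qed

lemma op_associator_swap:
  assumes "multilinear_op scale p A" "multilinear_op scale q B" "multilinear_op scale s C"
    and "p \<ge> 1" "q \<ge> 1" "s \<ge> 1" "length xs = p + q + s - 2"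
  shows "op_associator p q s A B C xs = op_associator p s q A C B xs"
  using assms
proof (induction xs arbitrary: p q s A B C)
  case Nil
  then show ?case by simp
next
  case (Cons x ys)
  have IH_C: "op_associator p q (s - 1) A B (\<lambda>zs. C (x # zs)) ys
      = op_associator p (s - 1) q A (\<lambda>zs. C (x # zs)) B ys" if "s \<ge> 2"
    using Cons.prems that by (intro Cons.IH)
      (auto intro: multilinear_op_Cons[of scale "s - 1", simplified])
  have IH_B: "op_associator p (q - 1) s A (\<lambda>zs. B (x # zs)) C ys
      = op_associator p s (q - 1) A C (\<lambda>zs. B (x # zs)) ys" if "q \<ge> 2"
    using Cons.prems that by (intro Cons.IH)
      (auto intro: multilinear_op_Cons[of scale "q - 1", simplified])
  have IH_A: "op_associator (p - 1) q s (\<lambda>zs. A (x # zs)) B C ys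
      = op_associator (p - 1) s q (\<lambda>zs. A (x # zs)) C B ys" if "p \<ge> 2"
    using Cons.prems that by (intro Cons.IH)
      (auto intro: multilinear_op_Cons[of scale "p - 1", simplified])
  show ?case
    using Cons.prems IH_A IH_B IH_C
    by (simp add: op_associator_Cons[of p A q B s C] op_associator_Cons[of p A s C q B] add_ac)
qed

end

section \<open>The composition on \<open>U\<^sub>0\<^sub>-\<close>\<close>

text \<open>\<open>(A\<^sub>p \<circ> B\<^sub>q) \<circ> C\<^sub>s\<close> has order \<open>p + q + s - 2\<close>.\<close>

definition order_triples :: "nat \<Rightarrow> (nat \<times> nat \<times> nat) set" where
  "order_triples r = {(p, q, s). 1 \<le> p \<and> 1 \<le> q \<and> 1 \<le> s \<and> p + q + s = r + 2}"

lemma circ_eq_sum: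
  "length xs = r \<Longrightarrow> r \<ge> 1 \<Longrightarrow>
   circ A B r xs = (\<Sum>p = 1..r. opcomp p (r + 1 - p) (A p) (B (r + 1 - p)) xs)"
  unfolding circ_def by simp

lemma circ_circ_left_eq_sum:
  assumes "length xs = r" "r \<ge> 1"
  shows "circ (circ A B) C r xs =
    (\<Sum>(p, q, s)\<in>order_triples r. opcomp (p + q - 1) s (opcomp p q (A p) (B q)) (C s) xs)"
proof -
  have "circ (circ A B) C r xs = (\<Sum>k = 1..r. opcomp k (r + 1 - k) (circ A B k) (C (r + 1 - k)) xs)"
    using assms by (rule circ_eq_sum)
  also have "\<dots> = (\<Sum>k = 1..r. opcomp k (r + 1 - k)
       (\<lambda>ys. \<Sum>p = 1..k. opcomp p (k + 1 - p) (A p) (B (k + 1 - p)) ys) (C (r + 1 - k)) xs)"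
    using assms by (intro sum.cong refl opcomp_cong) (auto simp: circ_eq_sum)
  also have "\<dots> = (\<Sum>k = 1..r. \<Sum>p = 1..k. opcomp k (r + 1 - k)
       (opcomp p (k + 1 - p) (A p) (B (k + 1 - p))) (C (r + 1 - k)) xs)"
    by (simp add: opcomp_sum_left)
  also have "\<dots> = (\<Sum>(k, p)\<in>(SIGMA k:{1..r}. {1..k}). opcomp k (r + 1 - k)
       (opcomp p (k + 1 - p) (A p) (B (k + 1 - p))) (C (r + 1 - k)) xs)"
    by (rule sum.Sigma) auto
  also have "\<dots> = (\<Sum>(p, q, s)\<in>order_triples r. opcomp (p + q - 1) s (opcomp p q (A p) (B q)) (C s) xs)"
    by (rule sum.reindex_bij_witness[where i = "\<lambda>(p, q, s). (p + q - 1, p)"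
          and j = "\<lambda>(k, p). (p, k + 1 - p, r + 1 - k)"])
      (auto simp: order_triples_def)
  finally show ?thesis .
qed

lemma circ_add_left: "circ (A1 + A2) B = circ A1 B + circ A2 B"
  by (simp add: fun_eq_iff circ_def plus_fun_def opcomp_add_left sum.distrib)

lemma U0m_multilinear_op: "A \<in> U0m sc \<Longrightarrow> multilinear_op sc p (A p)"
  unfolding U0m_def by blast

lemma U0m_finite_support: "A \<in> U0m sc \<Longrightarrow> finite {p. A p \<noteq> (\<lambda>_. 0)}"
  unfolding U0m_def by blast

lemma vector_space_scale_U0m:
  assumes "vector_space sc"
  shows "vector_space (scale_U0m sc)"
  using assms
  unfolding vector_space_def module_def scale_U0m_def
  by (simp add: fun_eq_iff)

context vector_space
begin

interpretation vs: vector_space_pair scale scale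
  by unfold_locales

lemma subspace_U0m: "module.subspace (scale_U0m scale) (U0m scale)"
proof -
  interpret U: vector_space "scale_U0m scale"
    by (rule vector_space_scale_U0m[OF vector_space_axioms])
  show ?thesis
  proof (rule U.subspaceI)
    show "0 \<in> U0m scale"
      by (simp add: U0m_def multilinear_op_def zero_fun_def vs.linear_zero)
  next
    fix A B assume A: "A \<in> U0m scale" and B: "B \<in> U0m scale"
    have "{p. (A + B) p \<noteq> (\<lambda>_. 0)} \<subseteq> {p. A p \<noteq> (\<lambda>_. 0)} \<union> {p. B p \<noteq> (\<lambda>_. 0)}"
      by auto
    then have "finite {p. (A + B) p \<noteq> (\<lambda>_. 0)}"
      using U0m_finite_support[OF A] U0m_finite_support[OF B] by (rule finite_subset[OF _ finite_UnI])
    moreover have "multilinear_op scale p ((A + B) p)" for p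
      using U0m_multilinear_op[OF A, of p] U0m_multilinear_op[OF B, of p]
      unfolding multilinear_op_def by (auto intro: vs.linear_compose_add)
    ultimately show "A + B \<in> U0m scale"
      using A B unfolding U0m_def by auto
  next
    fix c A assume A: "A \<in> U0m scale"
    have "{p. scale_U0m scale c A p \<noteq> (\<lambda>_. 0)} \<subseteq> {p. A p \<noteq> (\<lambda>_. 0)}"
      by (auto simp: scale_U0m_def)
    then have "finite {p. scale_U0m scale c A p \<noteq> (\<lambda>_. 0)}"
      using U0m_finite_support[OF A] by (rule finite_subset)
    moreover have "multilinear_op scale p (scale_U0m scale c A p)" for p
      using U0m_multilinear_op[OF A, of p]
      unfolding multilinear_op_def scale_U0m_def by (auto intro: vs.linear_compose_scale_right)
    ultimately show "scale_U0m scale c A \<in> U0m scale"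
      using A unfolding U0m_def by (auto simp: scale_U0m_def)
  qed
qed

lemma circ_scale_left: "circ (scale_U0m scale c A) B = scale_U0m scale c (circ A B)"
  by (simp add: fun_eq_iff circ_def scale_U0m_def opcomp_map_left scale_right_distrib
      scale_sum_right)

lemma circ_add_right:
  assumes "A \<in> U0m scale"
  shows "circ A (B1 + B2) = circ A B1 + circ A B2"
  using assms
  by (auto simp: fun_eq_iff circ_def plus_fun_def sum.distrib[symmetric]
      intro!: sum.cong opcomp_add_right U0m_multilinear_op)

lemma circ_scale_right:
  assumes "A \<in> U0m scale"
  shows "circ A (scale_U0m scale c B) = scale_U0m scale c (circ A B)"
  using assms
  by (auto simp: fun_eq_iff circ_def scale_U0m_def scale_sum_right
      intro!: sum.cong opcomp_scale_right U0m_multilinear_op)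

lemma circ_U0m:
  assumes A: "A \<in> U0m scale" and B: "B \<in> U0m scale"
  shows "circ A B \<in> U0m scale"
proof -
  obtain NA where NA: "\<And>p. A p \<noteq> (\<lambda>_. 0) \<Longrightarrow> p \<le> NA"
    using U0m_finite_support[OF A] unfolding finite_nat_set_iff_bounded_le by auto
  obtain NB where NB: "\<And>q. B q \<noteq> (\<lambda>_. 0) \<Longrightarrow> q \<le> NB"
    using U0m_finite_support[OF B] unfolding finite_nat_set_iff_bounded_le by auto
  have "circ A B r xs = 0" if "r > NA + NB" for r xs
  proof (cases "length xs = r \<and> r \<ge> 1")
    case True
    then have xs: "length xs = r" "r \<ge> 1" by auto
    have "opcomp p (r + 1 - p) (A p) (B (r + 1 - p)) xs = 0" if "p \<in> {1..r}" for p
    proof (cases "p \<le> NA")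
      case True
      then have "B (r + 1 - p) = (\<lambda>_. 0)"
        using NB \<open>r > NA + NB\<close> by fastforce
      then show ?thesis
        using xs that by (auto intro: opcomp_zero_right U0m_multilinear_op[OF A])
    next
      case False
      then have "A p = (\<lambda>_. 0)"
        using NA by blast
      then show ?thesis
        by (simp add: opcomp_zero_left)
    qed
    then show ?thesis
      using xs by (simp add: circ_eq_sum)
  qed (auto simp: circ_def)
  then have "{r. circ A B r \<noteq> (\<lambda>_. 0)} \<subseteq> {..NA + NB}"
    by (force simp: not_le[symmetric])
  then have "finite {r. circ A B r \<noteq> (\<lambda>_. 0)}"
    by (rule finite_subset) simp
  moreover have "multilinear_op scale r (circ A B r)" for r
    unfolding multilinear_op_def
  proof (intro allI impI)
    fix us vs :: "'b list"
    assume "length us + 1 + length vs = r"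
    then show "Vector_Spaces.linear scale scale (\<lambda>x. circ A B r (us @ x # vs))"
      using U0m_multilinear_op[OF A] U0m_multilinear_op[OF B]
      by (simp add: circ_eq_sum, intro vs.linear_compose_sum ballI opcomp_linear_slot) auto
  qed
  ultimately show ?thesis
    unfolding U0m_def by (auto simp: circ_def fun_eq_iff)
qed

lemma circ_circ_right_eq_sum:
  assumes "length xs = r" "r \<ge> 1" "\<And>p. multilinear_op scale p (A p)"
  shows "circ A (circ B C) r xs =
    (\<Sum>(p, q, s)\<in>order_triples r. opcomp p (q + s - 1) (A p) (opcomp q s (B q) (C s)) xs)"
proof -
  have "circ A (circ B C) r xs
      = (\<Sum>p = 1..r. opcomp p (r + 1 - p) (A p) (circ B C (r + 1 - p)) xs)"
    using assms by (intro circ_eq_sum)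
  also have "\<dots> = (\<Sum>p = 1..r. opcomp p (r + 1 - p) (A p)
       (\<lambda>ys. \<Sum>q = 1..r + 1 - p. opcomp q (r + 1 - p + 1 - q) (B q) (C (r + 1 - p + 1 - q)) ys) xs)"
    using assms by (intro sum.cong refl opcomp_cong) (auto simp: circ_eq_sum)
  also have "\<dots> = (\<Sum>p = 1..r. \<Sum>q = 1..r + 1 - p. opcomp p (r + 1 - p) (A p)
       (opcomp q (r + 1 - p + 1 - q) (B q) (C (r + 1 - p + 1 - q))) xs)"
    using assms by (intro sum.cong refl opcomp_sum_right) auto
  also have "\<dots> = (\<Sum>(p, q)\<in>(SIGMA p:{1..r}. {1..r + 1 - p}). opcomp p (r + 1 - p) (A p)
       (opcomp q (r + 1 - p + 1 - q) (B q) (C (r + 1 - p + 1 - q))) xs)"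
    by (rule sum.Sigma) auto
  also have "\<dots> = (\<Sum>(p, q, s)\<in>order_triples r. opcomp p (q + s - 1) (A p) (opcomp q s (B q) (C s)) xs)"
    by (rule sum.reindex_bij_witness[where i = "\<lambda>(p, q, s). (p, q)"
          and j = "\<lambda>(p, q). (p, q, r + 2 - p - q)"])
      (auto simp: order_triples_def)
  finally show ?thesis .
qed

lemma circ_right_symmetric:
  assumes A: "A \<in> U0m scale" and B: "B \<in> U0m scale" and C: "C \<in> U0m scale"
  shows "circ (circ A B) C - circ A (circ B C) = circ (circ A C) B - circ A (circ C B)"
proof (intro ext)
  fix r xs
  show "(circ (circ A B) C - circ A (circ B C)) r xs = (circ (circ A C) B - circ A (circ C B)) r xs"
  proof (cases "length xs = r \<and> r \<ge> 1")
    case True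
    then have xs: "length xs = r" "r \<ge> 1" by auto
    note mA = U0m_multilinear_op[OF A] and mB = U0m_multilinear_op[OF B] and mC = U0m_multilinear_op[OF C]
    have "(circ (circ A B) C - circ A (circ B C)) r xs
        = (\<Sum>(p, q, s)\<in>order_triples r. op_associator p q s (A p) (B q) (C s) xs)"
      by (simp add: circ_circ_left_eq_sum[OF xs] circ_circ_right_eq_sum[OF xs mA] op_associator_def
          sum_subtractf[symmetric] case_prod_unfold)
    also have "\<dots> = (\<Sum>(p, q, s)\<in>order_triples r. op_associator p q s (A p) (C q) (B s) xs)"
      by (rule sum.reindex_bij_witness[where i = "\<lambda>(p, q, s). (p, s, q)"
            and j = "\<lambda>(p, q, s). (p, s, q)"])
        (auto simp: order_triples_def xs add_ac intro: op_associator_swap[OF mA mC mB])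
    also have "\<dots> = (circ (circ A C) B - circ A (circ C B)) r xs"
      by (simp add: circ_circ_left_eq_sum[OF xs] circ_circ_right_eq_sum[OF xs mA] op_associator_def
          sum_subtractf[symmetric] case_prod_unfold)
    finally show ?thesis .
  qed (auto simp: circ_def)
qed

end

theorem corollary2p2:
  fixes scale :: "'a::field_char_0 \<Rightarrow> 'v::ab_group_add \<Rightarrow> 'v"
  assumes "vector_space scale"
  shows "is_lie_algebra (scale_U0m scale) (U0m scale) bracket"
proof -
  interpret V: vector_space scale
    by (rule assms)
  interpret U: vector_space "scale_U0m scale"
    by (rule vector_space_scale_U0m[OF assms])
  show ?thesis
    unfolding bracket_def[abs_def]
  proof (rule U.is_lie_algebra_commutator)
    show "U.subspace (U0m scale)"
      by (rule V.subspace_U0m)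
  qed (simp_all add: V.circ_U0m circ_add_left V.circ_add_right V.circ_scale_left V.circ_scale_right
      V.circ_right_symmetric)
qed

end
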